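(* For each $\rho>2$, the operator $f\mapsto\|H_tf(x)\|_{v(\rho),[1,\infty)}$ (variation in $t\in[1,\infty)$) is of weak type $(1,1)$ with respect to $\gamma_\infty$. More strongly, there is a constant $C$ such that for every $f\in L^1(\gamma_\infty)$ with $\|f\|_{L^1(\gamma_\infty)}=1$, \[\gamma_\infty\bigl\{x\in\mathbb R:\ \|H_tf(x)\|_{v(\rho),[1,\infty)}>\alpha\bigr\}\le\frac{C}{\alpha\sqrt{\log\alpha}},\qquad\alpha>2.\]
   Context: $R(x)=x^2/2$, $d\gamma_\infty(u)=(2\pi)^{-1/2}e^{-R(u)}du$ on $\mathbb R$. $K_t(x,u)=\frac{e^{R(x)}}{\sqrt{1-e^{-2t}}}\exp\bigl(-\frac12\frac{(e^{-t}u-x)^2}{1-e^{-2t}}\bigr)$ and $H_tf(x)=\int f(u)K_t(x,u)\,d\gamma_\infty(u)$ for $f\in L^1(\gamma_\infty)$, $t>0$. For $1\le\rho<\infty$ and an interval $I$, $\|\phi\|_{v(\rho),I}=\sup(\sum_{i=1}^n|\phi(t_i)-\phi(t_{i-1})|^\rho)^{1/\rho}$ over finite increasing sequences $t_0<\dots<t_n$ in $I$. *)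

theory Defs
  imports "HOL-Analysis.Analysis"
begin

definition R :: "real \<Rightarrow> real" where
  "R x = x^2 / 2"

definition gamma_inf :: "real measure" where
  "gamma_inf = density lborel (\<lambda>u. ennreal ((2 * pi) powr (-1/2) * exp (- R u)))"

definition K :: "real \<Rightarrow> real \<Rightarrow> real \<Rightarrow> real" where
  "K t x u = exp (R x) / sqrt (1 - exp (-2 * t)) *
      exp (- (1/2) * (exp (-t) * u - x)^2 / (1 - exp (-2 * t)))"

definition H :: "real \<Rightarrow> (real \<Rightarrow> real) \<Rightarrow> real \<Rightarrow> real" where
  "H t f x = (\<integral>u. f u * K t x u \<partial>gamma_inf)"

definition var_norm :: "real \<Rightarrow> real set \<Rightarrow> (real \<Rightarrow> real) \<Rightarrow> ereal" where
  "var_norm \<rho> I \<phi> =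
     (SUP p \<in> {(n, t). (\<forall>i\<le>n. t i \<in> I) \<and> (\<forall>i<n. t i < t (Suc i))}.
        ereal ((\<Sum>i\<in>{1..fst p}. \<bar>\<phi> (snd p i) - \<phi> (snd p (i - 1))\<bar> powr \<rho>) powr (1 / \<rho>)))"

end

(*
  For t \<ge> 1 the kernel factors as K_t(x,u) = e^{R(x)} A(t) E(t) with
  A(t) = (1 - e^{-2t})^{-1/2} decreasing with values in [1,2], and
  E(t) = exp(-(e^{-t} u - x)^2 / (2 (1 - e^{-2t}))) with values in [0,1] and
  monotone on either side of a single turning point. Hence t \<mapsto> K_t(x,u) has
  total variation at most 5 e^{R(x)} on [1,\<infinity>), uniformly in u, and
  integrating against f gives total variation of t \<mapsto> H_t f(x) at most
  5 e^{R(x)} \<parallel>f\<parallel>_1. The \<rho>-variation is dominated by the total variation for every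
  \<rho> \<ge> 1, so the level set {\<parallel>H f(x)\<parallel>_{v(\<rho>)} > \<alpha>} lies in {5 \<parallel>f\<parallel>_1 e^{x^2/2} > \<alpha>},
  and the Gaussian tail bound \<gamma>_\<infinity>{|x| > s} \<le> e^{-s^2/2}/s gives both estimates.
*)
theory Submission
  imports Defs "HOL-Probability.Distributions" "HOL-Real_Asymp.Real_Asymp"
begin

section \<open>Variation sums over finite partitions\<close>

definition ascending_in :: "real set \<Rightarrow> nat \<Rightarrow> (nat \<Rightarrow> real) \<Rightarrow> bool" where
  "ascending_in S n t \<longleftrightarrow> (\<forall>i\<le>n. t i \<in> S) \<and> (\<forall>i<n. t i \<le> t (Suc i))"

definition variation_sum :: "(real \<Rightarrow> real) \<Rightarrow> nat \<Rightarrow> (nat \<Rightarrow> real) \<Rightarrow> real" where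
  "variation_sum g n t = (\<Sum>i\<in>{1..n}. \<bar>g (t i) - g (t (i - 1))\<bar>)"

lemma ascending_in_mem: "ascending_in S n t \<Longrightarrow> i \<le> n \<Longrightarrow> t i \<in> S"
  by (simp add: ascending_in_def)

lemma variation_sum_uminus [simp]: "variation_sum (\<lambda>s. - g s) n t = variation_sum g n t"
  by (simp add: variation_sum_def abs_minus_commute)

lemma variation_sum_diff_const [simp]: "variation_sum (\<lambda>s. g s - c) n t = variation_sum g n t"
  by (simp add: variation_sum_def)

lemma variation_sum_cmult: "variation_sum (\<lambda>s. c * g s) n t = \<bar>c\<bar> * variation_sum g n t"
  by (simp add: variation_sum_def sum_distrib_left flip: right_diff_distrib abs_mult)

lemma variation_sum_add_le:
  "variation_sum (\<lambda>s. g s + h s) n t \<le> variation_sum g n t + variation_sum h n t"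
  unfolding variation_sum_def sum.distrib[symmetric]
  by (intro sum_mono abs_diff_triangle_ineq)

lemma variation_sum_mono_on:
  assumes "mono_on S g" and "ascending_in S n t"
  shows "variation_sum g n t = g (t n) - g (t 0)"
  using assms(2)
proof (induction n)
  case 0
  then show ?case by (simp add: variation_sum_def)
next
  case (Suc n)
  then have "ascending_in S n t" and "g (t n) \<le> g (t (Suc n))"
    by (auto simp: ascending_in_def intro!: mono_onD[OF assms(1)])
  with Suc.IH show ?case by (simp add: variation_sum_def sum.cl_ivl_Suc)
qed

lemma variation_sum_monotone_le:
  assumes "mono_on S g \<or> antimono_on S g" and t: "ascending_in S n t"
    and bounds: "\<And>s. s \<in> S \<Longrightarrow> a \<le> g s \<and> g s \<le> b"
  shows "variation_sum g n t \<le> b - a"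
proof -
  have ends: "a \<le> g (t i) \<and> g (t i) \<le> b" if "i \<le> n" for i
    using bounds ascending_in_mem[OF t that] by blast
  from assms(1) show ?thesis
  proof
    assume "mono_on S g"
    then show ?thesis
      using variation_sum_mono_on[OF _ t] ends[of 0] ends[of n] by simp
  next
    assume "antimono_on S g"
    then have "mono_on S (\<lambda>s. - g s)"
      by (auto intro!: mono_onI dest: monotone_onD)
    then show ?thesis
      using variation_sum_mono_on[OF _ t, of "\<lambda>s. - g s"] ends[of 0] ends[of n] by simp
  qed
qed

lemma variation_sum_two_monotone_pieces:
  assumes S: "is_interval S" and t: "ascending_in S n t"
    and lower: "mono_on {s\<in>S. s \<le> c} g \<or> antimono_on {s\<in>S. s \<le> c} g"
    and upper: "mono_on {s\<in>S. c \<le> s} g \<or> antimono_on {s\<in>S. c \<le> s} g"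
    and bounds: "\<And>s. s \<in> S \<Longrightarrow> a \<le> g s \<and> g s \<le> b"
  shows "variation_sum g n t \<le> 2 * (b - a)"
proof -
  have "a \<le> b"
    using bounds[OF ascending_in_mem[OF t, of 0]] by simp
  have piece: "mono_on S (g \<circ> h) \<or> antimono_on S (g \<circ> h)"
    if g: "mono_on A g \<or> antimono_on A g" and h: "mono_on S h" "h ` S \<subseteq> A" for A h
    using g monotone_on_o[OF _ h] by blast
  consider (split) "c \<in> S" | (single) "mono_on S g \<or> antimono_on S g"
  proof (cases "c \<in> S")
    case False
    have "S \<subseteq> {s\<in>S. s \<le> c} \<or> S \<subseteq> {s\<in>S. c \<le> s}"
    proof (rule ccontr)
      assume none: "\<not> ?thesis"
      then obtain x where "x \<in> S" "c \<le> x"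
        by (auto simp: subset_iff intro: less_imp_le)
      moreover obtain y where "y \<in> S" "y \<le> c"
        using none by (auto simp: subset_iff intro: less_imp_le)
      ultimately have "c \<in> S"
        using S unfolding is_interval_1 by blast
      with \<open>c \<notin> S\<close> show False ..
    qed
    with lower upper that(2) show ?thesis
      using monotone_on_subset by blast
  qed
  then show ?thesis
  proof cases
    case split
    \<comment> \<open>\<open>g s = g (min s c) + g (max s c) - g c\<close>, and both compositions are monotone
      on all of \<open>S\<close>\<close>
    define g1 where "g1 = g \<circ> (\<lambda>s. min s c)"
    define g2 where "g2 = g \<circ> (\<lambda>s. max s c)"
    have "variation_sum g n t = variation_sum (\<lambda>s. g1 s + (g2 s - g c)) n t"
      unfolding g1_def g2_def
      by (intro arg_cong[where f="\<lambda>g. variation_sum g n t"] ext) (simp add: min_def max_def)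
    also have "\<dots> \<le> variation_sum g1 n t + variation_sum g2 n t"
      using variation_sum_add_le[of g1 "\<lambda>s. g2 s - g c"] by simp
    also have "\<dots> \<le> (b - a) + (b - a)"
    proof (intro add_mono variation_sum_monotone_le[OF _ t])
      show "mono_on S g1 \<or> antimono_on S g1"
        unfolding g1_def using split by (intro piece[OF lower]) (auto intro!: mono_onI simp: min_def)
      show "mono_on S g2 \<or> antimono_on S g2"
        unfolding g2_def using split by (intro piece[OF upper]) (auto intro!: mono_onI simp: max_def)
    qed (use split bounds in \<open>auto simp: g1_def g2_def min_def max_def\<close>)
    finally show ?thesis by simp
  next
    case single
    then have "variation_sum g n t \<le> b - a"
      by (rule variation_sum_monotone_le[OF _ t bounds])
    with \<open>a \<le> b\<close> show ?thesis by simp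
  qed
qed

lemma variation_sum_mult_le:
  assumes t: "ascending_in S n t"
    and f: "\<And>s. s \<in> S \<Longrightarrow> \<bar>f s\<bar> \<le> Mf" and g: "\<And>s. s \<in> S \<Longrightarrow> \<bar>g s\<bar> \<le> Mg"
  shows "variation_sum (\<lambda>s. f s * g s) n t \<le> Mf * variation_sum g n t + Mg * variation_sum f n t"
  unfolding variation_sum_def sum_distrib_left sum.distrib[symmetric]
proof (intro sum_mono)
  fix i assume "i \<in> {1..n}"
  then have "\<bar>f (t i)\<bar> \<le> Mf" "\<bar>g (t (i - 1))\<bar> \<le> Mg"
    using f g ascending_in_mem[OF t] by auto
  then have "\<bar>f (t i) * (g (t i) - g (t (i - 1)))\<bar> \<le> Mf * \<bar>g (t i) - g (t (i - 1))\<bar>"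
    and "\<bar>g (t (i - 1)) * (f (t i) - f (t (i - 1)))\<bar> \<le> Mg * \<bar>f (t i) - f (t (i - 1))\<bar>"
    by (auto simp: abs_mult intro: mult_right_mono)
  moreover have "f (t i) * g (t i) - f (t (i - 1)) * g (t (i - 1)) =
      f (t i) * (g (t i) - g (t (i - 1))) + g (t (i - 1)) * (f (t i) - f (t (i - 1)))"
    by (simp add: algebra_simps)
  ultimately show "\<bar>f (t i) * g (t i) - f (t (i - 1)) * g (t (i - 1))\<bar>
      \<le> Mf * \<bar>g (t i) - g (t (i - 1))\<bar> + Mg * \<bar>f (t i) - f (t (i - 1))\<bar>"
    by (smt (verit) abs_triangle_ineq)
qed

lemma root_sum_powr_le_sum:
  fixes a :: "'i \<Rightarrow> real"
  assumes "1 \<le> p" and nonneg: "\<And>i. i \<in> I \<Longrightarrow> 0 \<le> a i"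
  shows "(\<Sum>i\<in>I. a i powr p) powr (1 / p) \<le> (\<Sum>i\<in>I. a i)"
proof (cases "finite I")
  case True
  define S where "S = (\<Sum>i\<in>I. a i)"
  have "0 \<le> S"
    unfolding S_def using nonneg by (simp add: sum_nonneg)
  have term_le: "a i powr p \<le> a i * S powr (p - 1)" if "i \<in> I" for i
  proof (cases "a i = 0")
    case False
    with nonneg that have "0 < a i" by force
    have "a i \<le> S"
      unfolding S_def using nonneg that True by (intro member_le_sum) auto
    with \<open>0 < a i\<close> \<open>1 \<le> p\<close> have "a i * a i powr (p - 1) \<le> a i * S powr (p - 1)"
      by (intro mult_left_mono powr_mono2) auto
    with \<open>0 < a i\<close> show ?thesis
      by (simp add: powr_diff powr_one_eq_one[symmetric] del: powr_one_eq_one)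
  qed simp
  have "(\<Sum>i\<in>I. a i powr p) \<le> (\<Sum>i\<in>I. a i * S powr (p - 1))"
    by (intro sum_mono term_le)
  also have "\<dots> = S * S powr (p - 1)"
    by (simp add: S_def sum_distrib_right)
  also have "\<dots> = S powr p"
    using \<open>0 \<le> S\<close> \<open>1 \<le> p\<close> by (cases "S = 0") (auto simp: powr_diff)
  finally have "(\<Sum>i\<in>I. a i powr p) powr (1 / p) \<le> (S powr p) powr (1 / p)"
    using \<open>1 \<le> p\<close> by (intro powr_mono2) (auto intro: sum_nonneg)
  also have "\<dots> = S"
    using \<open>1 \<le> p\<close> \<open>0 \<le> S\<close> by (simp add: powr_powr)
  finally show ?thesis
    unfolding S_def .
qed simp

lemma var_norm_le_variation_sum_bound:
  assumes "1 \<le> \<rho>" and bound: "\<And>n t. ascending_in S n t \<Longrightarrow> variation_sum \<phi> n t \<le> B"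
  shows "var_norm \<rho> S \<phi> \<le> ereal B"
  unfolding var_norm_def
proof (rule SUP_least)
  fix p assume "p \<in> {(n, t). (\<forall>i\<le>n. t i \<in> S) \<and> (\<forall>i<n. t i < t (Suc i))}"
  then obtain n t where p: "p = (n, t)" and "ascending_in S n t"
    by (auto simp: ascending_in_def less_imp_le)
  have "(\<Sum>i\<in>{1..n}. \<bar>\<phi> (t i) - \<phi> (t (i - 1))\<bar> powr \<rho>) powr (1 / \<rho>) \<le> variation_sum \<phi> n t"
    unfolding variation_sum_def using \<open>1 \<le> \<rho>\<close> by (rule root_sum_powr_le_sum) simp
  also have "\<dots> \<le> B"
    by (rule bound) fact
  finally show "ereal ((\<Sum>i\<in>{1..fst p}. \<bar>\<phi> (snd p i) - \<phi> (snd p (i - 1))\<bar> powr \<rho>) powr (1 / \<rho>))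
      \<le> ereal B"
    by (simp add: p)
qed

section \<open>The Mehler kernel for \<open>t \<ge> 1\<close>\<close>

lemma min_inverse_le_one_le_max_inverse:
  fixes q :: real
  assumes "0 < q"
  shows "min q (1 / q) \<le> 1" and "1 \<le> max q (1 / q)"
proof -
  have "q \<le> 1 \<or> 1 / q \<le> 1" and "1 \<le> q \<or> 1 \<le> 1 / q"
    using assms by (auto simp: divide_le_eq_1 le_divide_eq_1)
  then show "min q (1 / q) \<le> 1" and "1 \<le> max q (1 / q)"
    by (auto simp: min_le_iff_disj le_max_iff_disj)
qed

definition mehler_gauss :: "real \<Rightarrow> real \<Rightarrow> real \<Rightarrow> real" where
  "mehler_gauss x u r = exp (- (1/2) * (r * u - x)\<^sup>2 / (1 - r\<^sup>2))"

definition mehler_scale :: "real \<Rightarrow> real" where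
  "mehler_scale t = 1 / sqrt (1 - exp (-2 * t))"

text \<open>The derivative of \<open>mehler_gauss x u\<close> has the sign of \<open>- (r u - x) (u - r x)\<close>, a quadratic
  in \<open>r\<close> with roots \<open>x / u\<close> and \<open>u / x\<close>. Their product is \<open>1\<close>, so on \<open>(0, 1)\<close> the sign
  changes at most once, at the smaller root (or never, when \<open>x u \<le> 0\<close>).\<close>
definition mehler_turning_point :: "real \<Rightarrow> real \<Rightarrow> real" where
  "mehler_turning_point x u = (if x * u \<le> 0 then 0 else min (x / u) (u / x))"

lemma K_eq_mehler_gauss:
  "K t x u = exp (R x) * (mehler_scale t * mehler_gauss x u (exp (-t)))"
  by (simp add: K_def mehler_scale_def mehler_gauss_def power2_eq_square mult.commute flip: exp_add)

lemma has_real_derivative_mehler_gauss: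
  assumes "r\<^sup>2 \<noteq> 1"
  shows "(mehler_gauss x u has_real_derivative
            - mehler_gauss x u r * ((r * u - x) * (u - r * x)) / (1 - r\<^sup>2)\<^sup>2) (at r)"
proof -
  have "1 - r\<^sup>2 \<noteq> 0"
    using assms by simp
  then show ?thesis
    unfolding mehler_gauss_def
    by (auto intro!: derivative_eq_intros simp: divide_simps) (simp add: power2_eq_square algebra_simps)
qed

lemma mehler_turning_point_bounds: "0 \<le> mehler_turning_point x u \<and> mehler_turning_point x u \<le> 1"
proof (cases "x * u \<le> 0")
  case False
  then have "0 < x * u"
    by simp
  then have "0 < x / u" "0 < u / x"
    by (auto simp: zero_less_divide_iff zero_less_mult_iff)
  with False show ?thesis
    using min_inverse_le_one_le_max_inverse(1)[OF \<open>0 < x / u\<close>] by (simp add: mehler_turning_point_def)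
qed (simp add: mehler_turning_point_def)

lemma mehler_quadratic_factor:
  assumes "0 < r" "r < 1"
  obtains c where "0 \<le> c" and "(r * u - x) * (u - r * x) = (r - mehler_turning_point x u) * c"
proof (cases "x * u \<le> 0")
  case True
  have "x * u * (1 + r\<^sup>2) \<le> 0"
    using True by (simp add: mult_nonpos_nonneg)
  moreover have "0 \<le> r * (u\<^sup>2 + x\<^sup>2)"
    using assms by simp
  moreover have "(r * u - x) * (u - r * x) = r * (u\<^sup>2 + x\<^sup>2) - x * u * (1 + r\<^sup>2)"
    by (simp add: power2_eq_square algebra_simps)
  ultimately have "0 \<le> (r * u - x) * (u - r * x)"
    by linarith
  then have "0 \<le> (r * u - x) * (u - r * x) / r"
    using assms by simp
  with True assms show ?thesis
    by (intro that) (auto simp: mehler_turning_point_def)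
next
  case False
  define q where "q = x / u"
  have "0 < x * u"
    using False by simp
  then have "0 < q" "u \<noteq> 0" "x \<noteq> 0"
    by (auto simp: q_def zero_less_divide_iff zero_less_mult_iff)
  have "u / x = 1 / q"
    by (simp add: q_def)
  with False have k: "mehler_turning_point x u = min q (1 / q)"
    by (simp add: mehler_turning_point_def flip: q_def)
  have "0 < max q (1 / q) - r"
    using min_inverse_le_one_le_max_inverse(2)[OF \<open>0 < q\<close>] assms by linarith
  with \<open>0 < x * u\<close> have "0 \<le> x * u * (max q (1 / q) - r)"
    by simp
  moreover have "(r * u - x) * (u - r * x) = x * u * (r - q) * (1 / q - r)"
    using \<open>u \<noteq> 0\<close> \<open>x \<noteq> 0\<close> by (simp add: q_def field_simps)
  moreover have "\<dots> = (r - min q (1 / q)) * (x * u * (max q (1 / q) - r))"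
    using \<open>0 < q\<close> by (cases "q \<le> 1 / q") (auto simp: min_def max_def field_simps)
  ultimately show ?thesis
    by (intro that[of "x * u * (max q (1 / q) - r)"]) (simp_all add: k)
qed

lemma mehler_gauss_mono_on:
  "mono_on {r. 0 < r \<and> r < 1 \<and> r \<le> mehler_turning_point x u} (mehler_gauss x u)"
proof (rule mono_onI)
  fix a b assume a: "a \<in> {r. 0 < r \<and> r < 1 \<and> r \<le> mehler_turning_point x u}"
    and b: "b \<in> {r. 0 < r \<and> r < 1 \<and> r \<le> mehler_turning_point x u}" and "a \<le> b"
  show "mehler_gauss x u a \<le> mehler_gauss x u b"
  proof (rule DERIV_nonneg_imp_nondecreasing[OF \<open>a \<le> b\<close>], rule exI, rule conjI)
    fix r assume "a \<le> r" "r \<le> b"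
    with a b have r: "0 < r" "r < 1" "r \<le> mehler_turning_point x u"
      by auto
    then show "(mehler_gauss x u has_real_derivative
        - mehler_gauss x u r * ((r * u - x) * (u - r * x)) / (1 - r\<^sup>2)\<^sup>2) (at r)"
      by (intro has_real_derivative_mehler_gauss) (simp add: abs_square_less_1 less_imp_neq)
    obtain c where "0 \<le> c" "(r * u - x) * (u - r * x) = (r - mehler_turning_point x u) * c"
      using mehler_quadratic_factor[OF r(1,2)] .
    with r(3) have "(r * u - x) * (u - r * x) \<le> 0"
      by (simp add: mult_nonpos_nonneg)
    then show "0 \<le> - mehler_gauss x u r * ((r * u - x) * (u - r * x)) / (1 - r\<^sup>2)\<^sup>2"
      by (simp add: mehler_gauss_def mult_nonneg_nonpos divide_nonpos_nonneg)
  qed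
qed

lemma mehler_gauss_antimono_on:
  "antimono_on {r. 0 < r \<and> r < 1 \<and> mehler_turning_point x u \<le> r} (mehler_gauss x u)"
proof (rule monotone_onI)
  fix a b assume a: "a \<in> {r. 0 < r \<and> r < 1 \<and> mehler_turning_point x u \<le> r}"
    and b: "b \<in> {r. 0 < r \<and> r < 1 \<and> mehler_turning_point x u \<le> r}" and "a \<le> b"
  show "mehler_gauss x u b \<le> mehler_gauss x u a"
  proof (rule DERIV_nonpos_imp_nonincreasing[OF \<open>a \<le> b\<close>], rule exI, rule conjI)
    fix r assume "a \<le> r" "r \<le> b"
    with a b have r: "0 < r" "r < 1" "mehler_turning_point x u \<le> r"
      by auto
    then show "(mehler_gauss x u has_real_derivative
        - mehler_gauss x u r * ((r * u - x) * (u - r * x)) / (1 - r\<^sup>2)\<^sup>2) (at r)"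
      by (intro has_real_derivative_mehler_gauss) (simp add: abs_square_less_1 less_imp_neq)
    obtain c where "0 \<le> c" "(r * u - x) * (u - r * x) = (r - mehler_turning_point x u) * c"
      using mehler_quadratic_factor[OF r(1,2)] .
    with r(3) have "0 \<le> (r * u - x) * (u - r * x)"
      by simp
    then show "- mehler_gauss x u r * ((r * u - x) * (u - r * x)) / (1 - r\<^sup>2)\<^sup>2 \<le> 0"
      by (simp add: mehler_gauss_def divide_nonpos_nonneg)
  qed
qed

lemma mehler_gauss_bounds:
  assumes "\<bar>r\<bar> < 1"
  shows "0 \<le> mehler_gauss x u r \<and> mehler_gauss x u r \<le> 1"
proof -
  have "0 < 1 - r\<^sup>2"
    using assms by (simp add: abs_square_less_1)
  then have "- (1/2) * (r * u - x)\<^sup>2 / (1 - r\<^sup>2) \<le> 0"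
    by (intro divide_nonpos_pos) auto
  then show ?thesis
    by (simp add: mehler_gauss_def)
qed

lemma mehler_gauss_exp_two_monotone_pieces:
  fixes x u :: real
  defines "E \<equiv> \<lambda>s. mehler_gauss x u (exp (- s))"
  obtains c where "mono_on {s\<in>{1..}. s \<le> c} E \<or> antimono_on {s\<in>{1..}. s \<le> c} E"
    and "mono_on {s\<in>{1..}. c \<le> s} E \<or> antimono_on {s\<in>{1..}. c \<le> s} E"
proof -
  define k where "k = mehler_turning_point x u"
  have exp_in: "0 < exp (- s) \<and> exp (- s) < 1" if "s \<in> {1..}" for s :: real
    using that by auto
  have rising: "mono_on {s\<in>{1..}. k \<le> exp (- s)} E"
  proof (rule mono_onI)
    fix a b assume "a \<in> {s\<in>{1..}. k \<le> exp (- s)}" "b \<in> {s\<in>{1..}. k \<le> exp (- s)}" "a \<le> b"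
    then show "E a \<le> E b"
      unfolding E_def k_def using exp_in
      by (intro monotone_onD[OF mehler_gauss_antimono_on]) auto
  qed
  have falling: "antimono_on {s\<in>{1..}. exp (- s) \<le> k} E"
  proof (rule monotone_onI)
    fix a b assume "a \<in> {s\<in>{1..}. exp (- s) \<le> k}" "b \<in> {s\<in>{1..}. exp (- s) \<le> k}" "a \<le> b"
    then show "E b \<le> E a"
      unfolding E_def k_def using exp_in
      by (intro monotone_onD[OF mehler_gauss_mono_on]) auto
  qed
  show ?thesis
  proof (cases "k = 0")
    case True
    then have "mono_on {s\<in>{1..}. 1 \<le> s} E" "mono_on {s\<in>{1..}. s \<le> 1} E"
      by (auto intro: monotone_on_subset[OF rising])
    then show ?thesis
      by (intro that[of 1]) auto
  next
    case False
    then have "0 < k"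
      using mehler_turning_point_bounds[of x u] by (simp add: k_def)
    have "k \<le> exp (- s) \<longleftrightarrow> s \<le> - ln k" "exp (- s) \<le> k \<longleftrightarrow> - ln k \<le> s" for s
      using \<open>0 < k\<close> exp_le_cancel_iff[of "ln k" "- s"] exp_le_cancel_iff[of "- s" "ln k"] by auto
    then have "{s\<in>{1..}. s \<le> - ln k} = {s\<in>{1..}. k \<le> exp (- s)}"
      and "{s\<in>{1..}. - ln k \<le> s} = {s\<in>{1..}. exp (- s) \<le> k}"
      by auto
    with rising falling show ?thesis
      by (intro that[of "- ln k"]) auto
  qed
qed

lemma mehler_scale_antimono: "antimono_on {0<..} mehler_scale"
proof (rule monotone_onI)
  fix a b :: real assume "a \<in> {0<..}" "b \<in> {0<..}" "a \<le> b"
  then have "0 < sqrt (1 - exp (-2 * a))" "sqrt (1 - exp (-2 * a)) \<le> sqrt (1 - exp (-2 * b))"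
    by auto
  then show "mehler_scale b \<le> mehler_scale a"
    unfolding mehler_scale_def by (intro divide_left_mono) auto
qed

lemma mehler_scale_bounds:
  assumes "1 \<le> s"
  shows "1 \<le> mehler_scale s \<and> mehler_scale s \<le> 2"
proof -
  define q where "q = sqrt (1 - exp (-2 * s))"
  have "exp (-2 * s) \<le> exp (-2)"
    using assms by simp
  also have "exp (-2) \<le> (3/4 :: real)"
    using exp_ge_add_one_self[of 2] by (simp add: exp_minus inverse_eq_divide field_simps)
  finally have "(1/2)\<^sup>2 \<le> 1 - exp (-2 * s)"
    by (simp add: power2_eq_square)
  then have "1/2 \<le> q"
    unfolding q_def by (rule real_le_rsqrt)
  moreover have "q \<le> 1"
    by (simp add: q_def)
  moreover have "mehler_scale s = 1 / q"
    by (simp add: mehler_scale_def q_def)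
  ultimately show ?thesis
    by (simp add: le_divide_eq divide_le_eq)
qed

lemma K_bound:
  assumes "1 \<le> s"
  shows "\<bar>K s x u\<bar> \<le> 2 * exp (R x)"
proof -
  have "0 \<le> mehler_scale s" "mehler_scale s \<le> 2"
    and "0 \<le> mehler_gauss x u (exp (- s))" "mehler_gauss x u (exp (- s)) \<le> 1"
    using mehler_scale_bounds[OF assms] mehler_gauss_bounds[of "exp (- s)" x u] assms by auto
  then have "0 \<le> mehler_scale s * mehler_gauss x u (exp (- s))"
    and "mehler_scale s * mehler_gauss x u (exp (- s)) \<le> 2 * 1"
    by (auto intro!: mult_mono simp del: mult_1_right)
  then show ?thesis
    by (simp add: K_eq_mehler_gauss abs_mult)
qed

lemma K_variation_sum_le:
  assumes t: "ascending_in {1..} n t"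
  shows "variation_sum (\<lambda>s. K s x u) n t \<le> 5 * exp (R x)"
proof -
  define E where "E s = mehler_gauss x u (exp (- s))" for s
  have A: "1 \<le> mehler_scale s \<and> mehler_scale s \<le> 2" if "s \<in> {1..}" for s
    using mehler_scale_bounds that by simp
  have E: "0 \<le> E s \<and> E s \<le> 1" if "s \<in> {1..}" for s
    using mehler_gauss_bounds that by (simp add: E_def)
  have "antimono_on {1..} mehler_scale"
    by (rule monotone_on_subset[OF mehler_scale_antimono]) auto
  then have "variation_sum mehler_scale n t \<le> 1"
    using variation_sum_monotone_le[OF _ t A] by fastforce
  moreover obtain c
    where "mono_on {s\<in>{1..}. s \<le> c} E \<or> antimono_on {s\<in>{1..}. s \<le> c} E"
      and "mono_on {s\<in>{1..}. c \<le> s} E \<or> antimono_on {s\<in>{1..}. c \<le> s} E"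
    using mehler_gauss_exp_two_monotone_pieces unfolding E_def by blast
  then have "variation_sum E n t \<le> 2"
    using variation_sum_two_monotone_pieces[OF _ t _ _ E] by (auto simp: is_interval_ci)
  moreover have "variation_sum (\<lambda>s. mehler_scale s * E s) n t
      \<le> 2 * variation_sum E n t + 1 * variation_sum mehler_scale n t"
  proof (rule variation_sum_mult_le[OF t])
    show "\<bar>mehler_scale s\<bar> \<le> 2" "\<bar>E s\<bar> \<le> 1" if "s \<in> {1..}" for s
      using A[OF that] E[OF that] by auto
  qed
  ultimately have "variation_sum (\<lambda>s. mehler_scale s * E s) n t \<le> 5"
    by linarith
  moreover have "variation_sum (\<lambda>s. K s x u) n t = exp (R x) * variation_sum (\<lambda>s. mehler_scale s * E s) n t"
    by (simp add: K_eq_mehler_gauss E_def variation_sum_cmult)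
  ultimately show ?thesis
    by simp
qed

lemma variation_sum_integral_le:
  fixes f :: "'a \<Rightarrow> real" and k :: "real \<Rightarrow> 'a \<Rightarrow> real"
  assumes t: "ascending_in S n t" and f: "integrable M f"
    and fk: "\<And>s. s \<in> S \<Longrightarrow> integrable M (\<lambda>u. f u * k s u)"
    and var: "\<And>u. variation_sum (\<lambda>s. k s u) n t \<le> B"
  shows "variation_sum (\<lambda>s. \<integral>u. f u * k s u \<partial>M) n t \<le> B * (\<integral>u. \<bar>f u\<bar> \<partial>M)"
proof -
  define g where "g i u = f u * k (t i) u" for i u
  have g: "integrable M (g i)" if "i \<le> n" for i
    unfolding g_def using fk ascending_in_mem[OF t that] .
  have "variation_sum (\<lambda>s. \<integral>u. f u * k s u \<partial>M) n t = (\<Sum>i\<in>{1..n}. \<bar>\<integral>u. g i u - g (i - 1) u \<partial>M\<bar>)"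
    unfolding variation_sum_def
  proof (intro sum.cong refl)
    fix i assume "i \<in> {1..n}"
    then have "integrable M (g i)" "integrable M (g (i - 1))"
      using g by auto
    then show "\<bar>(\<integral>u. f u * k (t i) u \<partial>M) - (\<integral>u. f u * k (t (i - 1)) u \<partial>M)\<bar>
        = \<bar>\<integral>u. g i u - g (i - 1) u \<partial>M\<bar>"
      unfolding g_def by simp
  qed
  also have "\<dots> \<le> (\<Sum>i\<in>{1..n}. \<integral>u. \<bar>g i u - g (i - 1) u\<bar> \<partial>M)"
    by (intro sum_mono integral_abs_bound)
  also have "\<dots> = (\<integral>u. (\<Sum>i\<in>{1..n}. \<bar>g i u - g (i - 1) u\<bar>) \<partial>M)"
    using g by (subst Bochner_Integration.integral_sum) auto
  also have "\<dots> \<le> (\<integral>u. \<bar>f u\<bar> * B \<partial>M)"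
  proof (rule integral_mono)
    show "integrable M (\<lambda>u. \<Sum>i\<in>{1..n}. \<bar>g i u - g (i - 1) u\<bar>)"
      using g by (auto intro!: Bochner_Integration.integrable_sum Bochner_Integration.integrable_diff)
    show "integrable M (\<lambda>u. \<bar>f u\<bar> * B)"
      using f by simp
    fix u
    have "(\<Sum>i\<in>{1..n}. \<bar>g i u - g (i - 1) u\<bar>) = \<bar>f u\<bar> * variation_sum (\<lambda>s. k s u) n t"
      by (simp add: g_def variation_sum_def sum_distrib_left abs_mult flip: right_diff_distrib)
    also have "\<dots> \<le> \<bar>f u\<bar> * B"
      using var by (rule mult_left_mono) simp
    finally show "(\<Sum>i\<in>{1..n}. \<bar>g i u - g (i - 1) u\<bar>) \<le> \<bar>f u\<bar> * B" .
  qed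
  finally show ?thesis
    by (simp add: mult.commute)
qed

lemma integrable_mult_K:
  assumes f: "integrable gamma_inf f" and "1 \<le> s"
  shows "integrable gamma_inf (\<lambda>u. f u * K s x u)"
proof (rule Bochner_Integration.integrable_bound)
  show "integrable gamma_inf (\<lambda>u. 2 * exp (R x) * f u)"
    using f by simp
  show "(\<lambda>u. f u * K s x u) \<in> borel_measurable gamma_inf"
    using f by (simp add: gamma_inf_def K_def)
  show "AE u in gamma_inf. norm (f u * K s x u) \<le> norm (2 * exp (R x) * f u)"
  proof (rule AE_I2)
    fix u
    have "\<bar>f u\<bar> * \<bar>K s x u\<bar> \<le> \<bar>f u\<bar> * (2 * exp (R x))"
      by (rule mult_left_mono[OF K_bound[OF \<open>1 \<le> s\<close>]]) simp
    then show "norm (f u * K s x u) \<le> norm (2 * exp (R x) * f u)"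
      by (simp add: abs_mult mult_ac)
  qed
qed

lemma H_variation_sum_le:
  assumes f: "integrable gamma_inf f" and t: "ascending_in {1..} n t"
  shows "variation_sum (\<lambda>s. H s f x) n t \<le> 5 * exp (R x) * (\<integral>u. \<bar>f u\<bar> \<partial>gamma_inf)"
  unfolding H_def
  by (rule variation_sum_integral_le[OF t f integrable_mult_K[OF f] K_variation_sum_le[OF t]]) simp

lemma var_norm_H_le:
  assumes "integrable gamma_inf f" and "1 \<le> \<rho>"
  shows "var_norm \<rho> {1..} (\<lambda>t. H t f x) \<le> ereal (5 * exp (R x) * (\<integral>u. \<bar>f u\<bar> \<partial>gamma_inf))"
  using assms by (intro var_norm_le_variation_sum_bound H_variation_sum_le)

section \<open>Gaussian measure of the level sets of \<open>e\<^sup>R\<close>\<close>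

lemma gamma_inf_eq_normal_density: "gamma_inf = density lborel (normal_density 0 1)"
proof -
  have "(2 * pi) powr (-1/2) = inverse ((2 * pi) powr (1/2))"
    by (simp add: powr_minus[symmetric])
  also have "\<dots> = 1 / sqrt (2 * pi)"
    by (simp add: powr_half_sqrt inverse_eq_divide)
  finally have "(2 * pi) powr (-1/2) = 1 / sqrt (2 * pi)" .
  then show ?thesis
    unfolding gamma_inf_def
    by (intro arg_cong[where f = "density lborel"] ext) (simp add: normal_density_def R_def)
qed

lemma prob_space_gamma_inf: "prob_space gamma_inf"
  unfolding gamma_inf_eq_normal_density using prob_space_normal_density[of 1 0] by simp

lemma sets_gamma_inf [simp]: "sets gamma_inf = sets borel"
  by (simp add: gamma_inf_def)

lemma nn_integral_x_exp_neg_square_half: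
  assumes "0 \<le> s"
  shows "(\<integral>\<^sup>+x. ennreal (x * exp (- x\<^sup>2 / 2)) * indicator {s..} x \<partial>lborel) = exp (- s\<^sup>2 / 2)"
proof -
  have "(\<integral>\<^sup>+x. ennreal (x * exp (- x\<^sup>2 / 2)) * indicator {s..} x \<partial>lborel)
      = ennreal (0 - (- exp (- s\<^sup>2 / 2)))"
  proof (rule nn_integral_FTC_atLeast)
    show "((\<lambda>x::real. - exp (- x\<^sup>2 / 2)) \<longlongrightarrow> 0) at_top"
      by real_asymp
    show "(\<lambda>x::real. x * exp (- x\<^sup>2 / 2)) \<in> borel_measurable borel"
      by measurable
    fix x :: real assume "s \<le> x"
    then show "0 \<le> x * exp (- x\<^sup>2 / 2)"
      using assms by simp
    show "((\<lambda>x. - exp (- x\<^sup>2 / 2)) has_real_derivative x * exp (- x\<^sup>2 / 2)) (at x)"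
      by (rule derivative_eq_intros refl | simp)+
  qed
  then show ?thesis
    by simp
qed

text \<open>Use \<open>1 \<le> |x| / s\<close> on the tail and the antiderivative \<open>- exp (- x\<^sup>2 / 2)\<close> of
  \<open>x exp (- x\<^sup>2 / 2)\<close>.\<close>
lemma emeasure_gamma_inf_abs_gt:
  assumes s: "0 < s"
  shows "emeasure gamma_inf {x. s < \<bar>x\<bar>} \<le> ennreal (exp (- s\<^sup>2 / 2) / s)"
proof -
  define c :: real where "c = 1 / sqrt (2 * pi)"
  have "sqrt 4 \<le> sqrt (2 * pi)"
    using pi_gt3 by (intro real_sqrt_le_mono) simp
  then have c: "0 \<le> c" "c \<le> 1 / 2"
    by (auto simp: c_def)
  define F where "F x = ennreal (x * exp (- x\<^sup>2 / 2)) * indicator {s..} x" for x :: real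
  have F: "F \<in> borel_measurable borel"
    unfolding F_def by measurable
  have "emeasure gamma_inf {x. s < \<bar>x\<bar>}
      = (\<integral>\<^sup>+x. ennreal (c * exp (- x\<^sup>2 / 2)) * indicator {x. s < \<bar>x\<bar>} x \<partial>lborel)"
    unfolding gamma_inf_eq_normal_density
    by (subst emeasure_density) (auto simp: normal_density_def c_def)
  also have "\<dots> \<le> (\<integral>\<^sup>+x. ennreal (c / s) * F x + ennreal (c / s) * F (- x) \<partial>lborel)"
  proof (intro nn_integral_mono)
    have right_tail: "ennreal (c * exp (- y\<^sup>2 / 2)) \<le> ennreal (c / s) * F y" if "s < y" for y
    proof -
      have "c * exp (- y\<^sup>2 / 2) * 1 \<le> c * exp (- y\<^sup>2 / 2) * (y / s)"
        using that s c by (intro mult_left_mono) auto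
      then have "c * exp (- y\<^sup>2 / 2) \<le> c / s * (y * exp (- y\<^sup>2 / 2))"
        by (simp add: field_simps)
      moreover have "0 \<le> c / s" "0 \<le> y * exp (- y\<^sup>2 / 2)"
        using that s c by auto
      ultimately show ?thesis
        using that by (simp add: F_def ennreal_mult[symmetric] ennreal_leI)
    qed
    fix x :: real
    consider "s < x" | "s < - x" | "\<bar>x\<bar> \<le> s"
      by linarith
    then show "ennreal (c * exp (- x\<^sup>2 / 2)) * indicator {x. s < \<bar>x\<bar>} x
        \<le> ennreal (c / s) * F x + ennreal (c / s) * F (- x)"
    proof cases
      case 1
      then show ?thesis
        using right_tail[of x] by (simp add: indicator_def add_increasing2)
    next
      case 2
      then show ?thesis
        using right_tail[of "- x"] by (simp add: indicator_def add_increasing)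
    qed (simp add: indicator_def)
  qed
  also have "\<dots> = ennreal (c / s) * (\<integral>\<^sup>+x. F x \<partial>lborel) + ennreal (c / s) * (\<integral>\<^sup>+x. F (- x) \<partial>lborel)"
    using F by (simp add: nn_integral_add nn_integral_cmult)
  also have "(\<integral>\<^sup>+x. F (- x) \<partial>lborel) = (\<integral>\<^sup>+x. F x \<partial>lborel)"
    using nn_integral_real_affine[OF F, of "-1" 0] by simp
  also have "(\<integral>\<^sup>+x. F x \<partial>lborel) = exp (- s\<^sup>2 / 2)"
    unfolding F_def using s by (intro nn_integral_x_exp_neg_square_half) simp
  also have "ennreal (c / s) * ennreal (exp (- s\<^sup>2 / 2)) + ennreal (c / s) * ennreal (exp (- s\<^sup>2 / 2))
      = ennreal (2 * c * exp (- s\<^sup>2 / 2) / s)"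
    using s c by (simp add: ennreal_mult[symmetric] ennreal_plus[symmetric] del: ennreal_plus)
  also have "\<dots> \<le> ennreal (exp (- s\<^sup>2 / 2) / s)"
    using s c by (intro ennreal_leI divide_right_mono) auto
  finally show ?thesis .
qed

lemma measure_gamma_inf_exp_R_gt:
  assumes "1 < \<beta>"
  shows "measure gamma_inf {x. \<beta> < exp (R x)} \<le> 1 / (\<beta> * sqrt (2 * ln \<beta>))"
proof -
  define s where "s = sqrt (2 * ln \<beta>)"
  have "0 < s" "s\<^sup>2 = 2 * ln \<beta>"
    using assms by (auto simp: s_def)
  have "\<beta> < exp (R x) \<longleftrightarrow> s < \<bar>x\<bar>" for x
  proof -
    have "\<beta> < exp (R x) \<longleftrightarrow> 2 * ln \<beta> < x\<^sup>2"
      using assms by (simp add: R_def ln_less_cancel_iff[symmetric] mult.commute)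
    also have "\<dots> \<longleftrightarrow> sqrt (2 * ln \<beta>) < sqrt (x\<^sup>2)"
      by (simp only: real_sqrt_less_iff)
    also have "\<dots> \<longleftrightarrow> s < \<bar>x\<bar>"
      by (simp add: s_def)
    finally show ?thesis .
  qed
  then have "{x. \<beta> < exp (R x)} = {x. s < \<bar>x\<bar>}"
    by blast
  moreover have "exp (- s\<^sup>2 / 2) = 1 / \<beta>"
    using assms \<open>s\<^sup>2 = 2 * ln \<beta>\<close> by (simp add: exp_minus inverse_eq_divide)
  ultimately have "emeasure gamma_inf {x. \<beta> < exp (R x)} \<le> ennreal (1 / \<beta> / s)"
    using emeasure_gamma_inf_abs_gt[OF \<open>0 < s\<close>] by simp
  then show ?thesis
    using \<open>0 < s\<close> assms by (simp add: measure_def enn2real_leI s_def)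
qed

lemma measure_gamma_inf_level_le:
  assumes "0 \<le> C" and "0 < \<alpha>"
  shows "measure gamma_inf {x. \<alpha> < C * exp (R x)} \<le> exp 1 * C / \<alpha>"
proof (cases "C = 0")
  case False
  define \<beta> where "\<beta> = \<alpha> / C"
  have "0 < \<beta>"
    using assms False by (simp add: \<beta>_def)
  have level: "{x. \<alpha> < C * exp (R x)} = {x. \<beta> < exp (R x)}"
    using assms False by (auto simp: \<beta>_def field_simps)
  have bound: "exp 1 * C / \<alpha> = exp 1 / \<beta>"
    using assms False by (simp add: \<beta>_def)
  show ?thesis
  proof (cases "\<beta> \<le> exp 1")
    case True
    then have "1 \<le> exp 1 / \<beta>"
      using \<open>0 < \<beta>\<close> by simp
    then show ?thesis
      using prob_space.prob_le_1[OF prob_space_gamma_inf] unfolding bound by (meson order_trans)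
  next
    case False
    then have "exp 1 < \<beta>"
      by simp
    moreover have "1 < exp (1 :: real)"
      by simp
    ultimately have "1 < \<beta>"
      by linarith
    have "1 < ln \<beta>"
      using \<open>exp 1 < \<beta>\<close> \<open>0 < \<beta>\<close> ln_less_cancel_iff[of "exp 1" \<beta>] by simp
    then have "1 \<le> sqrt (2 * ln \<beta>)"
      by simp
    then have "1 / (\<beta> * sqrt (2 * ln \<beta>)) \<le> 1 / \<beta>"
      using \<open>0 < \<beta>\<close> \<open>1 < \<beta>\<close>
      by (intro divide_left_mono) (auto simp: mult_le_cancel_left1 intro!: mult_pos_pos)
    also have "\<dots> \<le> exp 1 / \<beta>"
      using \<open>0 < \<beta>\<close> by (simp add: divide_right_mono)
    finally show ?thesis
      using measure_gamma_inf_exp_R_gt[OF \<open>1 < \<beta>\<close>] unfolding level bound by linarith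
  qed
qed (use assms in simp)

lemma measure_gamma_inf_level_le_log:
  assumes "1 \<le> C" and "1 < \<alpha>"
  shows "measure gamma_inf {x. \<alpha> < C * exp (R x)} \<le> C ^ 3 / (\<alpha> * sqrt (ln \<alpha>))"
proof (cases "\<alpha> \<le> C\<^sup>2")
  case True
  have "ln \<alpha> \<le> C\<^sup>2"
    using ln_le_minus_one[of \<alpha>] assms True by linarith
  then have "sqrt (ln \<alpha>) \<le> C"
    using assms real_sqrt_le_mono[of "ln \<alpha>" "C\<^sup>2"] by simp
  then have "\<alpha> * sqrt (ln \<alpha>) \<le> C\<^sup>2 * C"
    using assms True by (intro mult_mono) auto
  then have "1 \<le> C ^ 3 / (\<alpha> * sqrt (ln \<alpha>))"
    using assms by (simp add: power_numeral_reduce field_simps)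
  then show ?thesis
    using prob_space.prob_le_1[OF prob_space_gamma_inf] order_trans by blast
next
  case False
  define \<beta> where "\<beta> = \<alpha> / C"
  have "C * 1 \<le> C * C"
    using assms by (intro mult_left_mono) auto
  with False have "C < \<alpha>"
    by (simp add: power2_eq_square)
  with assms have "1 < \<beta>"
    by (simp add: \<beta>_def)
  have level: "{x. \<alpha> < C * exp (R x)} = {x. \<beta> < exp (R x)}"
    using assms by (auto simp: \<beta>_def field_simps)
  have "ln (C\<^sup>2) < ln \<alpha>"
    using assms False by simp
  moreover have "ln (C\<^sup>2) = 2 * ln C" "ln \<beta> = ln \<alpha> - ln C"
    using assms by (simp_all add: \<beta>_def ln_realpow ln_div)
  ultimately have "sqrt (ln \<alpha>) \<le> sqrt (2 * ln \<beta>)"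
    by (intro real_sqrt_le_mono) linarith
  then have "1 / (\<beta> * sqrt (2 * ln \<beta>)) \<le> 1 / (\<beta> * sqrt (ln \<alpha>))"
    using assms \<open>1 < \<beta>\<close> by (intro divide_left_mono mult_left_mono mult_pos_pos) auto
  also have "\<dots> = C / (\<alpha> * sqrt (ln \<alpha>))"
    by (simp add: \<beta>_def)
  also have "\<dots> \<le> C ^ 3 / (\<alpha> * sqrt (ln \<alpha>))"
  proof (rule divide_right_mono)
    have "C * 1 \<le> C * C\<^sup>2"
      using assms by (intro mult_left_mono) auto
    then show "C \<le> C ^ 3"
      by (simp add: power_numeral_reduce)
  qed (use assms in simp)
  finally show ?thesis
    using measure_gamma_inf_exp_R_gt[OF \<open>1 < \<beta>\<close>] unfolding level by linarith
qed

lemma H_level_set_subset: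
  assumes "integrable gamma_inf f" and "1 \<le> \<rho>"
  shows "{x. var_norm \<rho> {1..} (\<lambda>t. H t f x) > ereal \<alpha>}
      \<subseteq> {x. \<alpha> < (5 * (\<integral>u. \<bar>f u\<bar> \<partial>gamma_inf)) * exp (R x)}"
proof
  fix x assume "x \<in> {x. var_norm \<rho> {1..} (\<lambda>t. H t f x) > ereal \<alpha>}"
  then have "ereal \<alpha> < ereal (5 * exp (R x) * (\<integral>u. \<bar>f u\<bar> \<partial>gamma_inf))"
    using var_norm_H_le[OF assms, of x] less_le_trans by force
  then show "x \<in> {x. \<alpha> < (5 * (\<integral>u. \<bar>f u\<bar> \<partial>gamma_inf)) * exp (R x)}"
    by (simp add: mult_ac)
qed

lemma level_set_in_sets_gamma_inf: "{x. \<alpha> < C * exp (R x)} \<in> sets gamma_inf"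
  unfolding sets_gamma_inf R_def by measurable

theorem proposition3p1:
  fixes \<rho> :: real
  assumes "\<rho> > 2"
  shows "(\<exists>C. \<forall>f. integrable gamma_inf f \<longrightarrow> (\<forall>\<alpha>>0.
            \<exists>A \<in> sets gamma_inf.
              {x. var_norm \<rho> {1..} (\<lambda>t. H t f x) > ereal \<alpha>} \<subseteq> A \<and>
              measure gamma_inf A \<le> C * (\<integral>u. \<bar>f u\<bar> \<partial>gamma_inf) / \<alpha>))
       \<and> (\<exists>C. \<forall>f. integrable gamma_inf f \<and> (\<integral>u. \<bar>f u\<bar> \<partial>gamma_inf) = 1 \<longrightarrow> (\<forall>\<alpha>>2.
            \<exists>A \<in> sets gamma_inf.
              {x. var_norm \<rho> {1..} (\<lambda>t. H t f x) > ereal \<alpha>} \<subseteq> A \<and>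
              measure gamma_inf A \<le> C / (\<alpha> * sqrt (ln \<alpha>))))"
proof -
  have "1 \<le> \<rho>"
    using assms by simp
  note level_subset = H_level_set_subset[OF _ this]
  show ?thesis
  proof (intro conjI exI allI impI)
    fix f :: "real \<Rightarrow> real" and \<alpha> :: real
    let ?N = "\<integral>u. \<bar>f u\<bar> \<partial>gamma_inf"
    assume f: "integrable gamma_inf f" and "0 < \<alpha>"
    have "measure gamma_inf {x. \<alpha> < (5 * ?N) * exp (R x)} \<le> (5 * exp 1) * ?N / \<alpha>"
      using measure_gamma_inf_level_le[of "5 * ?N" \<alpha>] \<open>0 < \<alpha>\<close> by (simp add: mult_ac)
    then show "\<exists>A \<in> sets gamma_inf. {x. var_norm \<rho> {1..} (\<lambda>t. H t f x) > ereal \<alpha>} \<subseteq> A \<and>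
        measure gamma_inf A \<le> (5 * exp 1) * ?N / \<alpha>"
      using level_subset[OF f] level_set_in_sets_gamma_inf by blast
  next
    fix f :: "real \<Rightarrow> real" and \<alpha> :: real
    assume f: "integrable gamma_inf f \<and> (\<integral>u. \<bar>f u\<bar> \<partial>gamma_inf) = 1" and "2 < \<alpha>"
    have "measure gamma_inf {x. \<alpha> < 5 * exp (R x)} \<le> 5 ^ 3 / (\<alpha> * sqrt (ln \<alpha>))"
      using \<open>2 < \<alpha>\<close> by (intro measure_gamma_inf_level_le_log) auto
    then show "\<exists>A \<in> sets gamma_inf. {x. var_norm \<rho> {1..} (\<lambda>t. H t f x) > ereal \<alpha>} \<subseteq> A \<and>
        measure gamma_inf A \<le> 5 ^ 3 / (\<alpha> * sqrt (ln \<alpha>))"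
      using level_subset[of f \<alpha>] f level_set_in_sets_gamma_inf by auto
  qed
qed

end
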